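(* Let $m\ge2$, $n=2m+1$, $A_i$ ($i=2,\dots,m$) and $B$ as follows: $A_i=E_i+E_{m+i}+E_{i-1,n}+E_{m+i-1,n}$ for $2\le i\le m-1$, $A_m=E_m-E_{2m}+E_{m-1,n}+E_{2m-1,n}$, $B=I_{m+1}\oplus0_m$. Let $i\in\{1,\dots,m\}$ and let $(Y_1,\dots,Y_i)$ be a strict facial reduction sequence for $\mathcal S^n_+$ all of whose members lie in $\operatorname{lin}\{B,A_2,\dots,A_m\}$. Then $$\mathcal S^n_+\cap Y_1^\perp\cap\dots\cap Y_i^\perp=0_{m+i}\oplus\mathcal S^{m-i+1}_+ .$$
   Context: $E_{ij}\in\mathcal S^n$ has only nonzero entries $1$ in positions $(i,j),(j,i)$; $E_i:=E_{ii}$; orthogonality is with respect to $S\bullet T=\operatorname{trace}(ST)$. For a closed convex cone $K$, $K^*=\{y:\langle y,x\rangle\ge0\ \forall x\in K\}$. A facial reduction sequence for $K$ is $(y_1,\dots,y_k)$ such that, with $F_0=K$ and $F_j=F_{j-1}\cap y_j^\perp$, $y_j\in F_{j-1}^*$ for all $j$; it is strict if moreover $y_j\notin F_{j-1}^\perp$ for all $j$. $0_k\oplus\mathcal S^{l}_+$ denotes matrices whose first $k$ rows and columns are zero and whose lower right $l\times l$ block is positive semidefinite. *)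

theory Defs
  imports Complex_Main
begin

text \<open>Real n x n matrices are represented as functions nat => nat => real with
 1-based indices; S^n consists of the symmetric ones vanishing outside {1..n} x {1..n}.\<close>

type_synonym smat = "nat \<Rightarrow> nat \<Rightarrow> real"

definition Sym :: "nat \<Rightarrow> smat set" where
  "Sym n = {X. (\<forall>p q. X p q = X q p) \<and> (\<forall>p q. \<not>(1 \<le> p \<and> p \<le> n \<and> 1 \<le> q \<and> q \<le> n) \<longrightarrow> X p q = 0)}"

definition PSD :: "nat \<Rightarrow> smat set" where
  "PSD n = {X \<in> Sym n. \<forall>v::nat \<Rightarrow> real. (\<Sum>p=1..n. \<Sum>q=1..n. v p * X p q * v q) \<ge> 0}"

definition tip :: "nat \<Rightarrow> smat \<Rightarrow> smat \<Rightarrow> real" where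
  "tip n S T = (\<Sum>p=1..n. \<Sum>q=1..n. S p q * T q p)"

definition dual_cone :: "nat \<Rightarrow> smat set \<Rightarrow> smat set" where
  "dual_cone n K = {Y \<in> Sym n. \<forall>X\<in>K. tip n Y X \<ge> 0}"

definition orth :: "nat \<Rightarrow> smat set \<Rightarrow> smat set" where
  "orth n F = {Y \<in> Sym n. \<forall>X\<in>F. tip n Y X = 0}"

definition perp :: "nat \<Rightarrow> smat \<Rightarrow> smat set" where
  "perp n Y = {X \<in> Sym n. tip n Y X = 0}"

definition fr_face :: "nat \<Rightarrow> smat set \<Rightarrow> smat list \<Rightarrow> smat set" where
  "fr_face n K ys = fold (\<lambda>y F. F \<inter> perp n y) ys K"

definition strict_frs :: "nat \<Rightarrow> smat set \<Rightarrow> smat list \<Rightarrow> bool" where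
  "strict_frs n K ys = (\<forall>j < length ys.
      ys ! j \<in> dual_cone n (fr_face n K (take j ys)) \<and>
      ys ! j \<notin> orth n (fr_face n K (take j ys)))"

definition Emat :: "nat \<Rightarrow> nat \<Rightarrow> smat" where
  "Emat i j = (\<lambda>p q. if (p = i \<and> q = j) \<or> (p = j \<and> q = i) then 1 else 0)"

definition Amat :: "nat \<Rightarrow> nat \<Rightarrow> smat" where
  "Amat m i = (let n = 2*m+1 in
     if i = m then (\<lambda>p q. Emat m m p q - Emat (2*m) (2*m) p q + Emat (m-1) n p q + Emat (2*m-1) n p q)
     else (\<lambda>p q. Emat i i p q + Emat (m+i) (m+i) p q + Emat (i-1) n p q + Emat (m+i-1) n p q))"

definition Bmat :: "nat \<Rightarrow> smat" where
  "Bmat m = (\<lambda>p q. if p = q \<and> 1 \<le> p \<and> p \<le> m+1 then 1 else 0)"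

definition linBA :: "nat \<Rightarrow> smat set" where
  "linBA m = {Y. \<exists>b c. Y = (\<lambda>p q. b * Bmat m p q + (\<Sum>k=2..m. c k * Amat m k p q))}"

definition zero_oplus_psd :: "nat \<Rightarrow> nat \<Rightarrow> smat set" where
  "zero_oplus_psd k l = {X \<in> Sym (k+l). (\<forall>p q. p \<le> k \<or> q \<le> k \<longrightarrow> X p q = 0)
      \<and> (\<lambda>p q. X (k+p) (k+q)) \<in> PSD l}"

end

theory Submission
  imports Defs
begin

text \<open>Let \<open>psd_face n k\<close> be the face \<open>0_k \<oplus> S^(n-k)_+\<close>; the claim is that the \<open>j\<close>-th face
  of the sequence is \<open>psd_face n (m+j)\<close>. Every \<open>Y = b B + \<Sum> c_l A_l\<close> has \<open>Y_nn = 0\<close> and carries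
  \<open>c_l\<close> in entry \<open>(m+l-1, n)\<close>. If \<open>Y\<close> is nonnegative on \<open>psd_face n k\<close>, testing it against
  rank-one matrices supported on \<open>{a, n}\<close> with \<open>a > k\<close> kills these entries, so \<open>c_l = 0\<close>
  whenever \<open>m+l-1 > k\<close>. Hence on \<open>S^n_+\<close> the first member acts as \<open>b\<close> times the trace of the
  leading \<open>(m+1)\<close>-block, and on \<open>psd_face n (m+j)\<close> the next member acts as
  \<open>\<plusminus>c_(j+1) X_(m+j+1,m+j+1)\<close>. Strictness makes the multiplier nonzero, and a PSD matrix
  with zero diagonal entries has the corresponding rows zero, which yields the next face.\<close>

definition psd_face :: "nat \<Rightarrow> nat \<Rightarrow> smat set" where
  "psd_face n k = {X \<in> PSD n. \<forall>p q. p \<le> k \<or> q \<le> k \<longrightarrow> X p q = 0}"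

abbreviation qform :: "nat \<Rightarrow> smat \<Rightarrow> (nat \<Rightarrow> real) \<Rightarrow> real" where
  "qform n X v \<equiv> \<Sum>p=1..n. \<Sum>q=1..n. v p * X p q * v q"

definition BA_comb :: "nat \<Rightarrow> real \<Rightarrow> (nat \<Rightarrow> real) \<Rightarrow> smat" where
  "BA_comb m b c = (\<lambda>p q. b * Bmat m p q + (\<Sum>k=2..m. c k * Amat m k p q))"

lemma linBA_iff: "Y \<in> linBA m \<longleftrightarrow> (\<exists>b c. Y = BA_comb m b c)"
  by (simp add: linBA_def BA_comb_def)

lemma sum_single_support:
  assumes "finite A" "a \<in> A" "\<And>r. r \<in> A \<Longrightarrow> r \<noteq> a \<Longrightarrow> f r = 0"
  shows "sum f A = f a"
  using sum.mono_neutral_right[of A "{a}" f] assms by auto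

lemma sum_two_support:
  assumes "finite A" "a \<in> A" "b \<in> A" "a \<noteq> b" "\<And>r. r \<in> A \<Longrightarrow> r \<noteq> a \<Longrightarrow> r \<noteq> b \<Longrightarrow> f r = 0"
  shows "sum f A = f a + f b"
  using sum.mono_neutral_right[of A "{a, b}" f] assms by auto

lemma qform_single_support:
  assumes "a \<in> {1..n}" "\<And>r. r \<noteq> a \<Longrightarrow> v r = 0"
  shows "qform n X v = v a * X a a * v a"
proof -
  have "(\<Sum>q=1..n. v p * X p q * v q) = v p * X p a * v a" for p
    using assms by (intro sum_single_support) auto
  then have "qform n X v = (\<Sum>p=1..n. v p * X p a * v a)" by simp
  also have "\<dots> = v a * X a a * v a"
    using assms by (intro sum_single_support) auto
  finally show ?thesis .
qed

lemma qform_two_support: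
  assumes "a \<in> {1..n}" "b \<in> {1..n}" "a \<noteq> b" "\<And>r. r \<noteq> a \<Longrightarrow> r \<noteq> b \<Longrightarrow> v r = 0"
  shows "qform n X v = v a * X a a * v a + v a * X a b * v b + v b * X b a * v a + v b * X b b * v b"
proof -
  have "(\<Sum>q=1..n. v p * X p q * v q) = v p * X p a * v a + v p * X p b * v b" for p
    using assms by (intro sum_two_support) auto
  then have "qform n X v = (\<Sum>p=1..n. v p * X p a * v a + v p * X p b * v b)" by simp
  also have "\<dots> = v a * X a a * v a + v a * X a b * v b + (v b * X b a * v a + v b * X b b * v b)"
    using assms by (intro sum_two_support) auto
  finally show ?thesis by simp
qed

lemma affine_nonneg_imp_slope_zero:
  fixes y z :: real
  assumes "\<And>t. 0 \<le> t * y + z"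
  shows "y = 0"
proof (rule ccontr)
  assume "y \<noteq> 0"
  have "0 \<le> (- (\<bar>z\<bar> + 1) / y) * y + z" by (rule assms)
  also have "\<dots> = z - (\<bar>z\<bar> + 1)" using \<open>y \<noteq> 0\<close> by simp
  finally show False by simp
qed

lemma offdiag_zero_if_qform_nonneg:
  assumes "a \<in> {1..n}" "b \<in> {1..n}" "a \<noteq> b" "X a b = X b a" "X a a = 0"
    and nonneg: "\<And>v. (\<And>r. r \<noteq> a \<Longrightarrow> r \<noteq> b \<Longrightarrow> v r = 0) \<Longrightarrow> 0 \<le> qform n X v"
  shows "X a b = 0"
proof -
  have "0 \<le> t * (2 * X a b) + X b b" for t
  proof -
    define v where "v r = (if r = a then t else if r = b then 1 else 0)" for r
    have "0 \<le> qform n X v" by (rule nonneg) (simp add: v_def)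
    also have "\<dots> = t * (2 * X a b) + X b b"
      using assms by (subst qform_two_support[of a n b]) (auto simp: v_def)
    finally show ?thesis .
  qed
  then show ?thesis using affine_nonneg_imp_slope_zero by fastforce
qed

lemma Sym_sym: "X \<in> Sym n \<Longrightarrow> X p q = X q p"
  by (simp add: Sym_def)

lemma Sym_outside: "X \<in> Sym n \<Longrightarrow> \<not> (1 \<le> p \<and> p \<le> n \<and> 1 \<le> q \<and> q \<le> n) \<Longrightarrow> X p q = 0"
  by (simp add: Sym_def)

lemma PSD_qform_nonneg: "X \<in> PSD n \<Longrightarrow> 0 \<le> qform n X v"
  by (simp add: PSD_def)

lemma PSD_diag_nonneg:
  assumes "X \<in> PSD n" "p \<in> {1..n}"
  shows "0 \<le> X p p"
  using PSD_qform_nonneg[OF assms(1), of "\<lambda>r. if r = p then 1 else 0"] assms(2)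
  by (subst (asm) qform_single_support[of p]) auto

lemma PSD_row_zero_if_diag_zero:
  assumes X: "X \<in> PSD n" and "p \<in> {1..n}" "X p p = 0"
  shows "X p q = 0"
proof (cases "q \<in> {1..n} \<and> q \<noteq> p")
  case True
  have "X \<in> Sym n" using X by (simp add: PSD_def)
  then have "X p q = X q p" by (rule Sym_sym)
  from offdiag_zero_if_qform_nonneg[of p n q X, OF _ _ _ this] assms True PSD_qform_nonneg[OF X]
  show ?thesis by simp
next
  case False
  then consider "q = p" | "\<not> (1 \<le> p \<and> p \<le> n \<and> 1 \<le> q \<and> q \<le> n)" by fastforce
  then show ?thesis
    using assms by cases (auto simp: PSD_def intro: Sym_outside)
qed

lemma psd_face_0: "psd_face n 0 = PSD n"
  unfolding psd_face_def using Sym_outside by (fastforce simp: PSD_def)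

lemma psd_face_mono: "k \<le> k' \<Longrightarrow> psd_face n k' \<subseteq> psd_face n k"
  by (auto simp: psd_face_def)

lemma outer_in_psd_face:
  fixes v :: "nat \<Rightarrow> real"
  assumes "\<And>r. r \<le> k \<or> n < r \<Longrightarrow> v r = 0"
  shows "(\<lambda>p q. v p * v q) \<in> psd_face n k"
proof -
  have "qform n (\<lambda>p q. v p * v q) w = (\<Sum>p=1..n. w p * v p)\<^sup>2" for w
    by (simp add: power2_eq_square sum_product mult_ac)
  moreover have "v p * v q = 0" if "\<not> (1 \<le> p \<and> p \<le> n \<and> 1 \<le> q \<and> q \<le> n) \<or> p \<le> k \<or> q \<le> k" for p q
    using assms that by (cases "p = 0"; cases "q = 0") auto
  ultimately show ?thesis
    by (auto simp: psd_face_def PSD_def Sym_def mult.commute)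
qed

lemma tip_outer: "tip n Y (\<lambda>p q. v p * v q) = qform n Y v"
  by (simp add: tip_def mult_ac)

lemma dual_psd_face_offdiag_zero:
  assumes Y: "Y \<in> dual_cone n (psd_face n k)"
    and "a \<in> {k<..n}" "b \<in> {k<..n}" "a \<noteq> b" "Y a a = 0"
  shows "Y a b = 0"
proof (rule offdiag_zero_if_qform_nonneg[of a n b])
  fix v :: "nat \<Rightarrow> real"
  assume "\<And>r. r \<noteq> a \<Longrightarrow> r \<noteq> b \<Longrightarrow> v r = 0"
  then have "(\<lambda>p q. v p * v q) \<in> psd_face n k"
    using assms by (intro outer_in_psd_face) auto
  then show "0 \<le> qform n Y v"
    using Y tip_outer[of n Y v] by (auto simp: dual_cone_def)
next
  show "Y a b = Y b a" using Y unfolding dual_cone_def by (blast intro: Sym_sym)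
qed (use assms in auto)

lemma psd_face_inter_perp:
  assumes "k \<le> k'" "k' \<le> n" "Y \<in> Sym n" "Y \<notin> orth n (psd_face n k)"
    and tipY: "\<And>X. X \<in> psd_face n k \<Longrightarrow> tip n Y X = d * (\<Sum>p\<in>{k<..k'}. X p p)"
  shows "psd_face n k \<inter> perp n Y = psd_face n k'"
proof -
  have "d \<noteq> 0"
  proof
    assume "d = 0"
    then have "Y \<in> orth n (psd_face n k)" using assms(3) tipY by (simp add: orth_def)
    with assms(4) show False ..
  qed
  show ?thesis
  proof (intro equalityI subsetI)
    fix X assume "X \<in> psd_face n k \<inter> perp n Y"
    then have X: "X \<in> psd_face n k" and "tip n Y X = 0" by (auto simp: perp_def)
    then have "(\<Sum>p\<in>{k<..k'}. X p p) = 0" using tipY \<open>d \<noteq> 0\<close> by simp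
    moreover have PSD: "X \<in> PSD n" using X by (simp add: psd_face_def)
    moreover have "\<forall>p\<in>{k<..k'}. 0 \<le> X p p"
      using PSD_diag_nonneg[OF PSD] assms(2) by auto
    ultimately have diag: "X p p = 0" if "p \<in> {k<..k'}" for p
      using sum_nonneg_eq_0_iff[of "{k<..k'}" "\<lambda>p. X p p"] that by simp
    have row: "X p q = 0" if "p \<le> k'" for p q
    proof (cases "p \<le> k")
      case True then show ?thesis using X by (simp add: psd_face_def)
    next
      case False
      show ?thesis
        by (rule PSD_row_zero_if_diag_zero[OF PSD]) (use False that assms(2) diag in auto)
    qed
    have "X p q = 0" if "p \<le> k' \<or> q \<le> k'" for p q
      using that row[of p q] row[of q p] Sym_sym[of X n p q] PSD by (auto simp: PSD_def)
    then show "X \<in> psd_face n k'" using PSD by (simp add: psd_face_def)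
  next
    fix X assume X': "X \<in> psd_face n k'"
    then have X: "X \<in> psd_face n k" using psd_face_mono assms(1) by blast
    have "tip n Y X = 0" using tipY[OF X] X' by (simp add: psd_face_def)
    then show "X \<in> psd_face n k \<inter> perp n Y" using X by (simp add: perp_def psd_face_def PSD_def)
  qed
qed

lemma sum_shift_vanishing_prefix:
  fixes f :: "nat \<Rightarrow> 'a::comm_monoid_add"
  assumes "k + l = n" "\<And>p. p \<le> k \<Longrightarrow> f p = 0"
  shows "(\<Sum>p=1..n. f p) = (\<Sum>p=1..l. f (k+p))"
proof -
  have "(\<Sum>p=1..l. f (k+p)) = (\<Sum>p=1+k..l+k. f p)"
    using sum.shift_bounds_cl_nat_ivl[of f 1 k l] by (simp add: add.commute)
  also have "\<dots> = (\<Sum>p=1..n. f p)" by (rule sum.mono_neutral_left) (use assms in auto)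
  finally show ?thesis by simp
qed

lemma qform_shift_vanishing_prefix:
  assumes "k + l = n" "\<And>p q. p \<le> k \<or> q \<le> k \<Longrightarrow> X p q = 0"
  shows "qform n X v = qform l (\<lambda>p q. X (k+p) (k+q)) (\<lambda>p. v (k+p))"
proof -
  have "qform n X v = (\<Sum>p=1..l. \<Sum>q=1..n. v (k+p) * X (k+p) q * v q)"
    using assms by (intro sum_shift_vanishing_prefix) auto
  also have "\<dots> = qform l (\<lambda>p q. X (k+p) (k+q)) (\<lambda>p. v (k+p))"
    using assms by (intro sum.cong refl sum_shift_vanishing_prefix) auto
  finally show ?thesis .
qed

lemma zero_oplus_psd_eq_psd_face:
  assumes kl: "k + l = n"
  shows "zero_oplus_psd k l = psd_face n k"
proof (intro equalityI subsetI)
  fix X assume "X \<in> zero_oplus_psd k l"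
  then have S: "X \<in> Sym n" and z: "\<And>p q. p \<le> k \<or> q \<le> k \<Longrightarrow> X p q = 0"
    and P: "(\<lambda>p q. X (k+p) (k+q)) \<in> PSD l"
    using kl by (auto simp: zero_oplus_psd_def)
  have "0 \<le> qform n X v" for v
    using PSD_qform_nonneg[OF P] qform_shift_vanishing_prefix[OF kl z] by simp
  then show "X \<in> psd_face n k" using S z by (simp add: psd_face_def PSD_def)
next
  fix X assume "X \<in> psd_face n k"
  then have P: "X \<in> PSD n" and z: "\<And>p q. p \<le> k \<or> q \<le> k \<Longrightarrow> X p q = 0"
    by (auto simp: psd_face_def)
  have S: "X \<in> Sym n" using P by (simp add: PSD_def)
  have "X (k+p) (k+q) = 0" if "\<not> (1 \<le> p \<and> p \<le> l \<and> 1 \<le> q \<and> q \<le> l)" for p q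
  proof (cases "p = 0 \<or> q = 0")
    case True then show ?thesis using z by auto
  next
    case False then show ?thesis using that kl by (intro Sym_outside[OF S]) auto
  qed
  then have S': "(\<lambda>p q. X (k+p) (k+q)) \<in> Sym l"
    using Sym_sym[OF S] by (simp add: Sym_def)
  have "0 \<le> qform l (\<lambda>p q. X (k+p) (k+q)) w" for w
    using PSD_qform_nonneg[OF P, of "\<lambda>p. w (p - k)"] qform_shift_vanishing_prefix[OF kl z] by simp
  then have "(\<lambda>p q. X (k+p) (k+q)) \<in> PSD l" using S' by (simp add: PSD_def)
  then show "X \<in> zero_oplus_psd k l" using S z kl by (simp add: zero_oplus_psd_def)
qed

lemma tip_single_support:
  assumes X: "X \<in> psd_face n k" and "a \<in> {1..n}"
    and S: "\<And>p q. k < p \<Longrightarrow> k < q \<Longrightarrow> (p, q) \<noteq> (a, a) \<Longrightarrow> S p q = 0"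
  shows "tip n S X = S a a * X a a"
proof -
  have z: "S p q * X q p = 0" if "(p, q) \<noteq> (a, a)" for p q
    using X S[OF _ _ that] by (cases "k < p \<and> k < q") (auto simp: psd_face_def)
  have "tip n S X = (\<Sum>p=1..n. S p a * X a p)"
    unfolding tip_def by (intro sum.cong refl sum_single_support) (use assms z in auto)
  also have "\<dots> = S a a * X a a" by (rule sum_single_support) (use assms z in auto)
  finally show ?thesis .
qed

lemma tip_BA_comb:
  "tip n (BA_comb m b c) X = b * tip n (Bmat m) X + (\<Sum>l=2..m. c l * tip n (Amat m l) X)"
proof -
  have "tip n (BA_comb m b c) X
      = (\<Sum>p=1..n. \<Sum>q=1..n. b * (Bmat m p q * X q p) + (\<Sum>l=2..m. c l * (Amat m l p q * X q p)))"
    unfolding tip_def BA_comb_def by (simp add: distrib_right sum_distrib_right mult.assoc)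
  also have "\<dots> = b * tip n (Bmat m) X + (\<Sum>l=2..m. c l * tip n (Amat m l) X)"
    unfolding tip_def by (simp add: sum.distrib sum_distrib_left sum.swap[of _ "{2..m}"])
  finally show ?thesis .
qed

lemma tip_Bmat: "tip n (Bmat m) X = (\<Sum>p\<in>{0<..min (m+1) n}. X p p)"
proof -
  have "(\<Sum>q=1..n. Bmat m p q * X q p) = (if p \<le> m+1 then X p p else 0)" if "p \<in> {1..n}" for p
    using that by (subst sum_single_support[of _ p]) (auto simp: Bmat_def)
  then have "tip n (Bmat m) X = (\<Sum>p=1..n. if p \<le> m+1 then X p p else 0)"
    unfolding tip_def by simp
  also have "\<dots> = (\<Sum>p\<in>{p\<in>{1..n}. p \<le> m+1}. X p p)"
    by (rule sum.inter_filter[symmetric]) simp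
  also have "{p\<in>{1..n}. p \<le> m+1} = {0<..min (m+1) n}" by auto
  finally show ?thesis .
qed

lemma Amat_unfold:
  assumes "2 \<le> l" "l \<le> m"
  shows "Amat m l p q = Emat l l p q + (if l = m then -1 else 1) * Emat (m+l) (m+l) p q
     + Emat (l-1) (2*m+1) p q + Emat (m+l-1) (2*m+1) p q"
  using assms by (auto simp: Amat_def Let_def mult_2)

lemma Amat_outside_corner:
  assumes "2 \<le> l" "l \<le> m" "m+l-1 < p" "m+l-1 < q" "(p, q) \<noteq> (m+l, m+l)"
  shows "Amat m l p q = 0"
  using assms by (auto simp: Amat_unfold Emat_def)

lemma Amat_diag: "2 \<le> l \<Longrightarrow> l \<le> m \<Longrightarrow> Amat m l (m+l) (m+l) = (if l = m then -1 else 1)"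
  by (auto simp: Amat_unfold Emat_def)

lemma Amat_last_corner: "2 \<le> l \<Longrightarrow> l \<le> m \<Longrightarrow> Amat m l (2*m+1) (2*m+1) = 0"
  by (auto simp: Amat_unfold Emat_def)

lemma Amat_last_col:
  "2 \<le> k \<Longrightarrow> k \<le> m \<Longrightarrow> 2 \<le> l \<Longrightarrow> l \<le> m \<Longrightarrow> Amat m k (m+l-1) (2*m+1) = (if k = l then 1 else 0)"
  by (auto simp: Amat_unfold Emat_def)

lemma tip_Amat_on_face:
  assumes "2 \<le> l" "l \<le> m" "X \<in> psd_face (2*m+1) k" "m+l-1 \<le> k"
  shows "tip (2*m+1) (Amat m l) X = (if l = m then -1 else 1) * X (m+l) (m+l)"
proof -
  have "tip (2*m+1) (Amat m l) X = Amat m l (m+l) (m+l) * X (m+l) (m+l)"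
    by (rule tip_single_support[OF assms(3)]) (use assms Amat_outside_corner in auto)
  then show ?thesis using assms by (simp add: Amat_diag)
qed

lemma BA_comb_last_corner:
  assumes "1 \<le> m"
  shows "BA_comb m b c (2*m+1) (2*m+1) = 0"
proof -
  have "(\<Sum>k=2..m. c k * Amat m k (2*m+1) (2*m+1)) = 0"
    by (rule sum.neutral) (use Amat_last_corner in auto)
  then show ?thesis using assms by (simp add: BA_comb_def Bmat_def)
qed

lemma BA_comb_last_col:
  assumes "2 \<le> l" "l \<le> m"
  shows "BA_comb m b c (m+l-1) (2*m+1) = c l"
proof -
  have "(\<Sum>k=2..m. c k * Amat m k (m+l-1) (2*m+1)) = (\<Sum>k=2..m. if k = l then c k else 0)"
    by (rule sum.cong[OF refl]) (use assms Amat_last_col in auto)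
  then show ?thesis using assms by (simp add: BA_comb_def Bmat_def)
qed

lemma BA_comb_coeff_zero_if_dual:
  assumes Y: "BA_comb m b c \<in> dual_cone (2*m+1) (psd_face (2*m+1) k)"
    and "2 \<le> l" "l \<le> m" "k < m+l-1"
  shows "c l = 0"
proof -
  let ?Y = "BA_comb m b c"
  have "?Y (2*m+1) (m+l-1) = 0"
    by (rule dual_psd_face_offdiag_zero[OF Y]) (use assms BA_comb_last_corner[of m b c] in auto)
  moreover have "?Y (2*m+1) (m+l-1) = ?Y (m+l-1) (2*m+1)"
    using Y unfolding dual_cone_def by (blast intro: Sym_sym)
  ultimately show ?thesis using BA_comb_last_col assms by simp
qed

lemma BA_comb_face_step_initial:
  assumes "1 \<le> m"
    and Y: "BA_comb m b c \<in> dual_cone (2*m+1) (PSD (2*m+1))"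
    and nor: "BA_comb m b c \<notin> orth (2*m+1) (PSD (2*m+1))"
  shows "PSD (2*m+1) \<inter> perp (2*m+1) (BA_comb m b c) = psd_face (2*m+1) (m+1)"
proof -
  have "c l = 0" if "l \<in> {2..m}" for l
    using Y that by (intro BA_comb_coeff_zero_if_dual[of m b c 0]) (auto simp: psd_face_0)
  then have "tip (2*m+1) (BA_comb m b c) X = b * (\<Sum>p\<in>{0<..m+1}. X p p)" for X
    by (simp add: tip_BA_comb tip_Bmat)
  then show ?thesis
    using psd_face_inter_perp[of 0 "m+1" "2*m+1" "BA_comb m b c" b] Y nor
    by (simp add: psd_face_0 dual_cone_def)
qed

lemma BA_comb_face_step:
  assumes "1 \<le> j" "j < m"
    and Y: "BA_comb m b c \<in> dual_cone (2*m+1) (psd_face (2*m+1) (m+j))"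
    and nor: "BA_comb m b c \<notin> orth (2*m+1) (psd_face (2*m+1) (m+j))"
  shows "psd_face (2*m+1) (m+j) \<inter> perp (2*m+1) (BA_comb m b c) = psd_face (2*m+1) (m+j+1)"
proof -
  let ?s = "if j+1 = m then -1 else (1::real)"
  have c: "c l = 0" if "j+2 \<le> l" "l \<le> m" for l
    by (rule BA_comb_coeff_zero_if_dual[OF Y]) (use that in auto)
  have tipY: "tip (2*m+1) (BA_comb m b c) X = c (j+1) * ?s * (\<Sum>p\<in>{m+j<..m+j+1}. X p p)"
    if X: "X \<in> psd_face (2*m+1) (m+j)" for X
  proof -
    have zero: "X p p = 0" if "p \<le> m+j" for p
      using X that by (simp add: psd_face_def)
    have "tip (2*m+1) (Bmat m) X = 0"
      using assms zero by (simp add: tip_Bmat)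
    moreover have "(\<Sum>l=2..m. c l * tip (2*m+1) (Amat m l) X) = c (j+1) * tip (2*m+1) (Amat m (j+1)) X"
    proof (rule sum_single_support)
      fix l assume "l \<in> {2..m}" "l \<noteq> j+1"
      then show "c l * tip (2*m+1) (Amat m l) X = 0"
        using c[of l] zero[of "m+l"] tip_Amat_on_face[OF _ _ X, of l] by force
    qed (use assms in auto)
    moreover have "tip (2*m+1) (Amat m (j+1)) X = ?s * X (m+j+1) (m+j+1)"
      using tip_Amat_on_face[OF _ _ X, of "j+1"] assms by simp
    moreover have "{m+j<..m+j+1} = {m+j+1}" by auto
    ultimately show ?thesis by (simp add: tip_BA_comb)
  qed
  show ?thesis
    by (rule psd_face_inter_perp[OF _ _ _ nor tipY]) (use assms in \<open>auto simp: dual_cone_def\<close>)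
qed

lemma fr_face_take_Suc:
  "j < length Ys \<Longrightarrow> fr_face n K (take (Suc j) Ys) = fr_face n K (take j Ys) \<inter> perp n (Ys ! j)"
  by (simp add: fr_face_def take_Suc_conv_app_nth)

lemma fr_face_BA_prefix:
  assumes "length Ys \<le> m"
    and strict: "strict_frs (2*m+1) (PSD (2*m+1)) Ys"
    and lin: "set Ys \<subseteq> linBA m"
    and "1 \<le> j" "j \<le> length Ys"
  shows "fr_face (2*m+1) (PSD (2*m+1)) (take j Ys) = psd_face (2*m+1) (m+j)"
  using assms(4,5)
proof (induction j)
  case 0
  then show ?case by simp
next
  case (Suc j)
  let ?F = "fr_face (2*m+1) (PSD (2*m+1)) (take j Ys)"
  have j: "j < length Ys" using Suc.prems by simp
  then obtain b c where Y: "Ys ! j = BA_comb m b c"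
    using lin nth_mem linBA_iff by blast
  have du: "BA_comb m b c \<in> dual_cone (2*m+1) ?F" and nor: "BA_comb m b c \<notin> orth (2*m+1) ?F"
    using strict j Y by (auto simp: strict_frs_def)
  have "fr_face (2*m+1) (PSD (2*m+1)) (take (Suc j) Ys) = ?F \<inter> perp (2*m+1) (BA_comb m b c)"
    using fr_face_take_Suc[OF j] Y by simp
  also have "\<dots> = psd_face (2*m+1) (m + Suc j)"
  proof (cases "j = 0")
    case True
    then show ?thesis
      using BA_comb_face_step_initial[of m b c] du nor assms(1) j by (simp add: fr_face_def)
  next
    case False
    then have "?F = psd_face (2*m+1) (m+j)" using Suc by simp
    then show ?thesis
      using BA_comb_face_step[of j m b c] du nor False assms(1) j by simp
  qed
  finally show ?case .
qed

theorem claim2: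
  fixes m i :: nat and Ys :: "smat list"
  assumes "m \<ge> 2" and "1 \<le> i" and "i \<le> m"
    and "length Ys = i"
    and "strict_frs (2*m+1) (PSD (2*m+1)) Ys"
    and "set Ys \<subseteq> linBA m"
  shows "fr_face (2*m+1) (PSD (2*m+1)) Ys = zero_oplus_psd (m+i) (m-i+1)"
proof -
  have "fr_face (2*m+1) (PSD (2*m+1)) Ys = psd_face (2*m+1) (m+i)"
    using fr_face_BA_prefix[of Ys m i] assms by simp
  also have "\<dots> = zero_oplus_psd (m+i) (m-i+1)"
    using zero_oplus_psd_eq_psd_face[of "m+i" "m-i+1" "2*m+1"] assms(3) by simp
  finally show ?thesis .
qed

end
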